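(* Let $K$ be an admissible kernel on $X\times Y$. Then the invariant measure $m_Y$ satisfies $$\inf_{\mu\in\mathcal{M}(Y)}\sup_{x\in X}U_K^\mu(x)=\sup_{x\in X}U_K^{m_Y}(x),$$ i.e. $m_Y$ minimizes $\mu\mapsto\sup_{x\in X}\int_Y K(x,y)\,d\mu(y)$ over $\mathcal{M}(Y)$.
   Context: $(X,d_X)$ and $(Y,d_Y)$ are compact metric spaces and $G$ is a compact topological group acting isometrically and transitively on both $X$ and $Y$. $\mathcal{M}(Y)$ is the set of Borel probability measures on $Y$; $m_X$ and $m_Y$ denote the unique $G$-invariant Radon (Borel) probability measures on $X$ and $Y$. A Borel measurable $K:X\times Y\to\mathbb{R}\cup\{-\infty\}$ is an admissible kernel if: (i) there is $B_K\in[0,\infty)$ with $-\infty\le K(x,y)\le B_K$ for all $x,y$; (ii) $\int_X|K(x,y)|\,dm_X(x)<\infty$ for every $y\in Y$; (iii) for every $y$, $K(\cdot,y)$ is upper semi-continuous; (iv) $K(g(x),y)=K(x,g^{-1}(y))$ for all $g\in G,x\in X,y\in Y$. For $\mu\in\mathcal{M}(Y)$, $U_K^\mu(x)=\int_Y K(x,y)\,d\mu(y)$. *)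

theory Defs
  imports "HOL-Analysis.Analysis" "HOL-Probability.Probability"
begin

text \<open>Lebesgue integral of an extended-real valued function: integral of the positive
part minus integral of the negative part (well defined here since kernels are bounded above).\<close>
definition ereal_integral :: "'a measure \<Rightarrow> ('a \<Rightarrow> ereal) \<Rightarrow> ereal" where
  "ereal_integral M f =
     enn2ereal (\<integral>\<^sup>+ x. e2ennreal (f x) \<partial>M) - enn2ereal (\<integral>\<^sup>+ x. e2ennreal (- f x) \<partial>M)"

definition potential :: "('x \<Rightarrow> 'y \<Rightarrow> ereal) \<Rightarrow> 'y measure \<Rightarrow> 'x \<Rightarrow> ereal" where
  "potential K \<mu> x = ereal_integral \<mu> (\<lambda>y. K x y)"

definition borel_prob_measures :: "'a::topological_space measure set" where
  "borel_prob_measures = {\<mu>. prob_space \<mu> \<and> sets \<mu> = sets borel}"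

definition upper_semicontinuous :: "('a::topological_space \<Rightarrow> ereal) \<Rightarrow> bool" where
  "upper_semicontinuous f \<longleftrightarrow> (\<forall>x c. f x < c \<longrightarrow> (\<forall>\<^sub>F z in nhds x. f z < c))"

definition isometric_transitive_action ::
    "('g::{topological_group_add,t2_space} \<Rightarrow> 'x::metric_space \<Rightarrow> 'x) \<Rightarrow> bool" where
  "isometric_transitive_action act \<longleftrightarrow>
     (\<forall>x. act 0 x = x) \<and> (\<forall>g h x. act (g + h) x = act g (act h x)) \<and>
     continuous_on UNIV (\<lambda>(g, x). act g x) \<and>
     (\<forall>g x y. dist (act g x) (act g y) = dist x y) \<and>
     (\<forall>x y. \<exists>g. act g x = y)"

definition invariant_prob_measure ::
    "('g \<Rightarrow> 'x::topological_space \<Rightarrow> 'x) \<Rightarrow> 'x measure \<Rightarrow> bool" where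
  "invariant_prob_measure act m \<longleftrightarrow> m \<in> borel_prob_measures \<and>
     (\<forall>g. \<forall>A \<in> sets borel. measure m (act g -` A) = measure m A)"

definition admissible_kernel ::
    "('g::group_add \<Rightarrow> 'x::topological_space \<Rightarrow> 'x) \<Rightarrow> ('g \<Rightarrow> 'y::topological_space \<Rightarrow> 'y)
      \<Rightarrow> 'x measure \<Rightarrow> ('x \<Rightarrow> 'y \<Rightarrow> ereal) \<Rightarrow> bool" where
  "admissible_kernel actX actY mX K \<longleftrightarrow>
     (\<lambda>(x, y). K x y) \<in> borel_measurable borel \<and>
     (\<exists>B::real. B \<ge> 0 \<and> (\<forall>x y. K x y \<le> ereal B)) \<and>
     (\<forall>y. (\<integral>\<^sup>+ x. e2ennreal \<bar>K x y\<bar> \<partial>mX) < \<infinity>) \<and>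
     (\<forall>y. upper_semicontinuous (\<lambda>x. K x y)) \<and>
     (\<forall>g x y. K (actX g x) y = K x (actY (- g) y))"

end

theory Submission imports Defs begin

(* For every probability measure mu on Y, Fubini and the invariance of m_X show that the
   m_X-average of the potential U_K^mu is C = \<integral> K(x, y) dm_X(x), which does not depend on y
   because G acts transitively on Y.  Hence sup U_K^mu \<ge> C for every mu.  On the other hand
   U_K^{m_Y} is constant on X, by transitivity on X and invariance of m_Y, so it equals its
   average C. *)

lemma compact_metric_countable_basis:
  assumes "compact (UNIV :: 'a::metric_space set)"
  obtains B :: "'a::metric_space set set" where "countable B" "topological_basis B"
proof -
  have "\<exists>F. finite F \<and> (UNIV :: 'a set) \<subseteq> (\<Union>c\<in>F. ball c (1 / Suc n))" for n :: nat
    by (rule compactE_image[OF assms, of UNIV "\<lambda>c. ball c (1 / Suc n)"]) auto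
  then obtain F where F: "\<And>n. finite (F n) \<and> (UNIV :: 'a set) \<subseteq> (\<Union>c\<in>F n. ball c (1 / Suc n))"
    by metis
  define B where "B = (\<Union>n. (\<lambda>c. ball c (1 / Suc n)) ` F n)"
  have "countable B"
    unfolding B_def using F by (intro countable_UN) (auto intro: countable_finite)
  moreover have "topological_basis B"
  proof (rule topological_basisI)
    show "open b" if "b \<in> B" for b
      using that unfolding B_def by auto
    fix U and x :: 'a
    assume "open U" "x \<in> U"
    then obtain e where "e > 0" "ball x e \<subseteq> U"
      by (auto simp: open_contains_ball)
    then obtain n :: nat where n: "1 / Suc n < e / 2"
      by (metis half_gt_zero_iff nat_approx_posE)
    have "x \<in> (\<Union>c\<in>F n. ball c (1 / Suc n))"
      using F[of n] by blast
    then obtain c where c: "c \<in> F n" "dist c x < 1 / Suc n"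
      by auto
    have "ball c (1 / Suc n) \<subseteq> ball x e"
    proof
      fix z assume "z \<in> ball c (1 / Suc n)"
      then have "dist x z < e"
        using c(2) n dist_triangle[of x z c] by (simp add: dist_commute)
      then show "z \<in> ball x e" by simp
    qed
    moreover have "ball c (1 / Suc n) \<in> B"
      unfolding B_def using c(1) by (intro UN_I[of n] image_eqI[of _ _ c]) auto
    moreover have "x \<in> ball c (1 / Suc n)"
      using c(2) by simp
    ultimately show "\<exists>b\<in>B. x \<in> b \<and> b \<subseteq> U"
      using \<open>ball x e \<subseteq> U\<close> by (intro bexI[of _ "ball c (1 / Suc n)"]) auto
  qed
  ultimately show ?thesis
    by (rule that)
qed

lemma sets_borel_prod_subset:
  fixes A :: "'a::topological_space set set" and B :: "'b::topological_space set set"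
  assumes "countable A" "topological_basis A" "countable B" "topological_basis B"
  shows "sets (borel :: ('a \<times> 'b) measure) \<subseteq> sets (borel \<Otimes>\<^sub>M borel)"
proof -
  have basis: "topological_basis ((\<lambda>(a, b). a \<times> b) ` (A \<times> B))"
    using assms by (intro topological_basis_prod)
  have "U \<in> sets (borel \<Otimes>\<^sub>M borel)" if "open U" for U :: "('a \<times> 'b) set"
  proof -
    obtain P where P: "P \<subseteq> (\<lambda>(a, b). a \<times> b) ` (A \<times> B)" "\<Union>P = U"
      using basis \<open>open U\<close> unfolding topological_basis_def by blast
    have "countable ((\<lambda>(a, b). a \<times> b) ` (A \<times> B))"
      using assms(1,3) by (intro countable_image countable_SIGMA)
    then have "countable P"
      using P(1) by (rule countable_subset[rotated])
    moreover have "p \<in> sets (borel \<Otimes>\<^sub>M borel)" if "p \<in> P" for p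
      using that P(1) assms(2,4) by (auto simp: topological_basis_open)
    ultimately show ?thesis
      using P(2) by (metis sets.countable_Union subsetI)
  qed
  then have "sigma_sets (space (borel \<Otimes>\<^sub>M borel :: ('a \<times> 'b) measure)) {S. open S}
      \<subseteq> sets (borel \<Otimes>\<^sub>M borel)"
    by (intro sets.sigma_sets_subset) auto
  then show ?thesis
    unfolding sets_borel by (simp add: space_pair_measure)
qed

text \<open>The library's \<open>borel_prod\<close> needs the type class \<open>second_countable_topology\<close>; here second
  countability comes from compactness instead.\<close>

lemma borel_measurable_pair_borel_compact:
  assumes "compact (UNIV :: 'a::metric_space set)" "compact (UNIV :: 'b::metric_space set)"
    and "f \<in> borel_measurable (borel :: ('a \<times> 'b) measure)"
  shows "f \<in> borel_measurable (borel \<Otimes>\<^sub>M borel)"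
proof -
  obtain A :: "'a set set" where "countable A" "topological_basis A"
    using compact_metric_countable_basis[OF assms(1)] .
  moreover obtain B :: "'b set set" where "countable B" "topological_basis B"
    using compact_metric_countable_basis[OF assms(2)] .
  ultimately have "sets (borel :: ('a \<times> 'b) measure) \<subseteq> sets (borel \<Otimes>\<^sub>M borel)"
    by (rule sets_borel_prod_subset)
  then show ?thesis
    using assms(3) measurable_mono[of borel borel borel "borel \<Otimes>\<^sub>M borel"]
    by (auto simp: space_pair_measure)
qed

lemma ereal_integral_mono:
  assumes "\<And>x. f x \<le> g x"
  shows "ereal_integral M f \<le> ereal_integral M g"
  unfolding ereal_integral_def
  by (intro ereal_minus_mono)
     (auto simp flip: less_eq_ennreal.rep_eq intro!: nn_integral_mono e2ennreal_mono assms)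

lemma ereal_integral_const:
  assumes "prob_space M"
  shows "ereal_integral M (\<lambda>x. c) = c"
proof -
  interpret prob_space M by fact
  have "enn2ereal (e2ennreal c) - enn2ereal (e2ennreal (- c)) = c"
    by (cases "0 \<le> c") (auto simp: enn2ereal_e2ennreal e2ennreal_neg zero_ennreal.rep_eq)
  then show ?thesis
    unfolding ereal_integral_def by (simp add: emeasure_space_1)
qed

lemma ereal_integral_le_SUP:
  assumes "prob_space M"
  shows "ereal_integral M f \<le> (SUP x. f x)"
proof -
  have "ereal_integral M f \<le> ereal_integral M (\<lambda>_. SUP x. f x)"
    by (intro ereal_integral_mono SUP_upper) simp
  then show ?thesis
    by (simp add: ereal_integral_const[OF assms])
qed

lemma ereal_integral_diff:
  fixes P Q :: "'a \<Rightarrow> ennreal"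
  assumes [measurable]: "P \<in> borel_measurable M" "Q \<in> borel_measurable M"
    and "(\<integral>\<^sup>+ x. P x \<partial>M) < \<infinity>" "(\<integral>\<^sup>+ x. Q x \<partial>M) < \<infinity>"
  shows "ereal_integral M (\<lambda>x. enn2ereal (P x) - enn2ereal (Q x))
         = enn2ereal (\<integral>\<^sup>+ x. P x \<partial>M) - enn2ereal (\<integral>\<^sup>+ x. Q x \<partial>M)"
proof -
  define A where "A = (\<integral>\<^sup>+ x. P x - Q x \<partial>M)"
  define B where "B = (\<integral>\<^sup>+ x. Q x - P x \<partial>M)"
  \<comment> \<open>fails for \<open>p = q = \<infinity>\<close>, hence the a.e. argument\<close>
  have "e2ennreal (- (enn2ereal p - enn2ereal q)) = q - p" if "p \<noteq> \<infinity>" for p q :: ennreal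
    using that by (cases p q rule: ennreal2_cases) (auto simp: enn2ereal_ennreal ennreal_minus e2ennreal_neg)
  moreover have "AE x in M. P x \<noteq> \<infinity>"
    using assms(3) by (intro nn_integral_noteq_infinite) auto
  ultimately have "(\<integral>\<^sup>+ x. e2ennreal (- (enn2ereal (P x) - enn2ereal (Q x))) \<partial>M) = B"
    unfolding B_def by (auto intro: nn_integral_cong_AE)
  then have integral_eq: "ereal_integral M (\<lambda>x. enn2ereal (P x) - enn2ereal (Q x))
      = enn2ereal A - enn2ereal B"
    unfolding ereal_integral_def A_def by simp
  \<comment> \<open>both sides are \<open>max p q\<close>\<close>
  have max_eq: "p - q + q = q - p + p" for p q :: ennreal
  proof (cases p q rule: linorder_cases)
    case less
    then show ?thesis
      using diff_eq_0_ennreal[OF order.strict_trans2[OF less top_greatest]]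
      by (simp add: diff_add_cancel_ennreal less_imp_le)
  next
    case greater
    then show ?thesis
      using diff_eq_0_ennreal[OF order.strict_trans2[OF greater top_greatest]]
      by (simp add: diff_add_cancel_ennreal less_imp_le)
  qed simp
  have "A + (\<integral>\<^sup>+ x. Q x \<partial>M) = (\<integral>\<^sup>+ x. P x - Q x + Q x \<partial>M)"
    unfolding A_def by (rule nn_integral_add[symmetric]) auto
  also have "\<dots> = (\<integral>\<^sup>+ x. Q x - P x + P x \<partial>M)"
    by (simp add: max_eq)
  also have "\<dots> = B + (\<integral>\<^sup>+ x. P x \<partial>M)"
    unfolding B_def by (rule nn_integral_add) auto
  finally have sum_eq: "A + (\<integral>\<^sup>+ x. Q x \<partial>M) = B + (\<integral>\<^sup>+ x. P x \<partial>M)" .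
  have "A \<le> (\<integral>\<^sup>+ x. P x \<partial>M)" "B \<le> (\<integral>\<^sup>+ x. Q x \<partial>M)"
    unfolding A_def B_def by (auto intro!: nn_integral_mono diff_le_self_ennreal)
  then have "A < \<infinity>" "B < \<infinity>"
    using assms(3,4) by auto
  moreover have "\<exists>r\<ge>0. z = ennreal r" if "z < \<infinity>" for z :: ennreal
    using that by (cases z rule: ennreal_cases) auto
  ultimately obtain a b p q where reals: "A = ennreal a" "B = ennreal b"
      "(\<integral>\<^sup>+ x. P x \<partial>M) = ennreal p" "(\<integral>\<^sup>+ x. Q x \<partial>M) = ennreal q"
      "0 \<le> a" "0 \<le> b" "0 \<le> p" "0 \<le> q"
    using assms(3,4) by meson
  then have "a + q = b + p"
    using sum_eq by (simp flip: ennreal_plus)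
  then show ?thesis
    unfolding integral_eq using reals by (simp add: enn2ereal_ennreal)
qed

lemma nn_integral_iterated_eq_section:
  fixes g :: "'a \<Rightarrow> 'b \<Rightarrow> ennreal"
  assumes "sigma_finite_measure M" "prob_space N"
    and "(\<lambda>(x, y). g x y) \<in> borel_measurable (M \<Otimes>\<^sub>M N)"
    and "\<And>y. y \<in> space N \<Longrightarrow> (\<integral>\<^sup>+ x. g x y \<partial>M) = (\<integral>\<^sup>+ x. g x y\<^sub>0 \<partial>M)"
  shows "(\<integral>\<^sup>+ x. (\<integral>\<^sup>+ y. g x y \<partial>N) \<partial>M) = (\<integral>\<^sup>+ x. g x y\<^sub>0 \<partial>M)"
proof -
  interpret N: prob_space N by fact
  interpret MN: pair_sigma_finite M N
    unfolding pair_sigma_finite_def using assms(1) N.sigma_finite_measure_axioms by blast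
  have "(\<integral>\<^sup>+ x. (\<integral>\<^sup>+ y. g x y \<partial>N) \<partial>M) = (\<integral>\<^sup>+ y. (\<integral>\<^sup>+ x. g x y \<partial>M) \<partial>N)"
    using assms(3) by (rule MN.Fubini'[symmetric])
  also have "\<dots> = (\<integral>\<^sup>+ y. (\<integral>\<^sup>+ x. g x y\<^sub>0 \<partial>M) \<partial>N)"
    by (rule nn_integral_cong) (rule assms(4))
  finally show ?thesis
    by (simp add: N.emeasure_space_1)
qed

lemma ereal_integral_iterated_eq_section:
  fixes f :: "'a \<Rightarrow> 'b \<Rightarrow> ereal"
  assumes "sigma_finite_measure M" "prob_space N"
    and f[measurable]: "(\<lambda>(x, y). f x y) \<in> borel_measurable (M \<Otimes>\<^sub>M N)"
    and pos: "\<And>y. y \<in> space N \<Longrightarrow>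
      (\<integral>\<^sup>+ x. e2ennreal (f x y) \<partial>M) = (\<integral>\<^sup>+ x. e2ennreal (f x y\<^sub>0) \<partial>M)"
    and neg: "\<And>y. y \<in> space N \<Longrightarrow>
      (\<integral>\<^sup>+ x. e2ennreal (- f x y) \<partial>M) = (\<integral>\<^sup>+ x. e2ennreal (- f x y\<^sub>0) \<partial>M)"
    and fin: "(\<integral>\<^sup>+ x. e2ennreal \<bar>f x y\<^sub>0\<bar> \<partial>M) < \<infinity>"
  shows "ereal_integral M (\<lambda>x. ereal_integral N (f x)) = ereal_integral M (\<lambda>x. f x y\<^sub>0)"
proof -
  interpret N: prob_space N by fact
  have [measurable]: "(\<lambda>(x, y). e2ennreal (f x y)) \<in> borel_measurable (M \<Otimes>\<^sub>M N)"
    "(\<lambda>(x, y). e2ennreal (- f x y)) \<in> borel_measurable (M \<Otimes>\<^sub>M N)"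
    by (simp_all add: split_beta')
  define P where "P x = (\<integral>\<^sup>+ y. e2ennreal (f x y) \<partial>N)" for x
  define Q where "Q x = (\<integral>\<^sup>+ y. e2ennreal (- f x y) \<partial>N)" for x
  have [measurable]: "P \<in> borel_measurable M" "Q \<in> borel_measurable M"
    unfolding P_def Q_def by (simp_all add: N.borel_measurable_nn_integral)
  have int_P: "(\<integral>\<^sup>+ x. P x \<partial>M) = (\<integral>\<^sup>+ x. e2ennreal (f x y\<^sub>0) \<partial>M)"
    and int_Q: "(\<integral>\<^sup>+ x. Q x \<partial>M) = (\<integral>\<^sup>+ x. e2ennreal (- f x y\<^sub>0) \<partial>M)"
    unfolding P_def Q_def using assms(1,2) pos neg by (simp_all add: nn_integral_iterated_eq_section)
  have "z \<le> \<bar>z\<bar>" "- z \<le> \<bar>z\<bar>" for z :: ereal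
    by (cases z; simp)+
  then have "(\<integral>\<^sup>+ x. e2ennreal (f x y\<^sub>0) \<partial>M) \<le> (\<integral>\<^sup>+ x. e2ennreal \<bar>f x y\<^sub>0\<bar> \<partial>M)"
    "(\<integral>\<^sup>+ x. e2ennreal (- f x y\<^sub>0) \<partial>M) \<le> (\<integral>\<^sup>+ x. e2ennreal \<bar>f x y\<^sub>0\<bar> \<partial>M)"
    by (simp_all add: nn_integral_mono e2ennreal_mono)
  then have finite: "(\<integral>\<^sup>+ x. P x \<partial>M) < \<infinity>" "(\<integral>\<^sup>+ x. Q x \<partial>M) < \<infinity>"
    unfolding int_P int_Q using fin by (auto dest: order.strict_trans1)
  have "(\<lambda>x. ereal_integral N (f x)) = (\<lambda>x. enn2ereal (P x) - enn2ereal (Q x))"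
    unfolding ereal_integral_def P_def Q_def ..
  then have "ereal_integral M (\<lambda>x. ereal_integral N (f x))
      = enn2ereal (\<integral>\<^sup>+ x. P x \<partial>M) - enn2ereal (\<integral>\<^sup>+ x. Q x \<partial>M)"
    using ereal_integral_diff[of P M Q] finite by simp
  also have "\<dots> = ereal_integral M (\<lambda>x. f x y\<^sub>0)"
    unfolding ereal_integral_def int_P int_Q ..
  finally show ?thesis .
qed

lemma isometric_transitive_action_measurable:
  assumes "isometric_transitive_action act"
  shows "act g \<in> borel_measurable borel"
proof -
  have "continuous_on UNIV (\<lambda>(g, x). act g x)"
    using assms unfolding isometric_transitive_action_def by blast
  then have "continuous_on UNIV ((\<lambda>(g, x). act g x) \<circ> Pair g)"
    by (intro continuous_on_compose) (auto intro: continuous_intros continuous_on_subset)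
  then show ?thesis
    by (intro borel_measurable_continuous_onI) (simp add: o_def)
qed

lemma distr_invariant_prob_measure:
  assumes "isometric_transitive_action act" "invariant_prob_measure act m"
  shows "distr m borel (act g) = m"
proof -
  have sets_m: "sets m = sets borel" and "prob_space m"
    using assms(2) unfolding invariant_prob_measure_def borel_prob_measures_def by auto
  interpret prob_space m by fact
  have [measurable]: "act g \<in> measurable m borel"
    using isometric_transitive_action_measurable[OF assms(1)] by (simp add: measurable_cong_sets[OF sets_m])
  show ?thesis
  proof (rule measure_eqI)
    fix A assume "A \<in> sets (distr m borel (act g))"
    then have A: "A \<in> sets borel" by simp
    have "emeasure (distr m borel (act g)) A = emeasure m (act g -` A)"
      using emeasure_distr[of "act g" m borel A] A sets_eq_imp_space_eq[OF sets_m] by simp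
    also have "\<dots> = emeasure m A"
      using assms(2) A unfolding invariant_prob_measure_def by (simp add: emeasure_eq_measure)
    finally show "emeasure (distr m borel (act g)) A = emeasure m A" .
  qed (simp add: sets_m)
qed

lemma nn_integral_invariant_prob_measure:
  assumes "isometric_transitive_action act" "invariant_prob_measure act m"
    and h: "h \<in> borel_measurable borel"
  shows "(\<integral>\<^sup>+ x. h (act g x) \<partial>m) = (\<integral>\<^sup>+ x. h x \<partial>m)"
proof -
  have sets_m: "sets m = sets borel"
    using assms(2) unfolding invariant_prob_measure_def borel_prob_measures_def by auto
  have "act g \<in> measurable m borel"
    using isometric_transitive_action_measurable[OF assms(1)] by (simp add: measurable_cong_sets[OF sets_m])
  then have "(\<integral>\<^sup>+ x. h (act g x) \<partial>m) = (\<integral>\<^sup>+ x. h x \<partial>distr m borel (act g))"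
    using h by (simp add: nn_integral_distr)
  then show ?thesis
    by (simp add: distr_invariant_prob_measure[OF assms(1,2)])
qed

lemma ereal_integral_invariant_prob_measure:
  assumes "isometric_transitive_action act" "invariant_prob_measure act m"
    and [measurable]: "(f :: _ \<Rightarrow> ereal) \<in> borel_measurable borel"
  shows "ereal_integral m (\<lambda>x. f (act g x)) = ereal_integral m f"
  using nn_integral_invariant_prob_measure[OF assms(1,2), of "\<lambda>x. e2ennreal (f x)" g]
    nn_integral_invariant_prob_measure[OF assms(1,2), of "\<lambda>x. e2ennreal (- f x)" g]
  unfolding ereal_integral_def by simp

lemma admissible_kernel_measurable_sections:
  assumes "admissible_kernel actX actY mX K"
  shows "(\<lambda>x. K x y) \<in> borel_measurable borel" "K x \<in> borel_measurable borel"
proof -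
  have K_measurable: "(\<lambda>(x, y). K x y) \<in> borel_measurable borel"
    using assms unfolding admissible_kernel_def by blast
  have "(\<lambda>x. (\<lambda>(x, y). K x y) (x, y)) \<in> borel_measurable borel"
    "(\<lambda>y. (\<lambda>(x, y). K x y) (x, y)) \<in> borel_measurable borel"
    by (rule measurable_compose[OF _ K_measurable], rule borel_measurable_continuous_onI,
        intro continuous_intros)+
  then show "(\<lambda>x. K x y) \<in> borel_measurable borel" "K x \<in> borel_measurable borel"
    by simp_all
qed

lemma admissible_kernel_nn_integral_section_eq:
  assumes "isometric_transitive_action actX" "isometric_transitive_action actY"
    and "invariant_prob_measure actX mX" "admissible_kernel actX actY mX K"
    and h: "h \<in> borel_measurable borel"
  shows "(\<integral>\<^sup>+ x. h (K x y) \<partial>mX) = (\<integral>\<^sup>+ x. h (K x y') \<partial>mX)"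
proof -
  obtain g where g: "actY g y' = y"
    using assms(2) unfolding isometric_transitive_action_def by blast
  have "K x y = K (actX (- g) x) y'" for x
    using assms(4) g unfolding admissible_kernel_def by (metis minus_minus)
  moreover have "(\<lambda>x. h (K x y')) \<in> borel_measurable borel"
    using h admissible_kernel_measurable_sections(1)[OF assms(4)] by measurable
  ultimately show ?thesis
    using nn_integral_invariant_prob_measure[OF assms(1,3), of "\<lambda>x. h (K x y')" "- g"] by simp
qed

lemma potential_invariant_measure_const:
  assumes "isometric_transitive_action actX" "isometric_transitive_action actY"
    and "invariant_prob_measure actY mY" "admissible_kernel actX actY mX K"
  shows "potential K mY x = potential K mY x'"
proof -
  obtain g where g: "actX g x' = x"
    using assms(1) unfolding isometric_transitive_action_def by blast
  have "K x = (\<lambda>y. K x' (actY (- g) y))"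
    using assms(4) g unfolding admissible_kernel_def by metis
  moreover have "K x' \<in> borel_measurable borel"
    by (rule admissible_kernel_measurable_sections(2)[OF assms(4)])
  ultimately show ?thesis
    unfolding potential_def by (simp add: ereal_integral_invariant_prob_measure[OF assms(2,3)])
qed

lemma admissible_kernel_average_potential:
  fixes K :: "'x::metric_space \<Rightarrow> 'y::metric_space \<Rightarrow> ereal"
  assumes "compact (UNIV :: 'x set)" "compact (UNIV :: 'y set)"
    and "isometric_transitive_action actX" "isometric_transitive_action actY"
    and "invariant_prob_measure actX mX" "admissible_kernel actX actY mX K"
    and "\<mu> \<in> borel_prob_measures"
  shows "ereal_integral mX (potential K \<mu>) = ereal_integral mX (\<lambda>x. K x y\<^sub>0)"
  unfolding potential_def
proof (rule ereal_integral_iterated_eq_section)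
  have mX: "prob_space mX" "sets mX = sets borel"
    using assms(5) unfolding invariant_prob_measure_def borel_prob_measures_def by auto
  then show "sigma_finite_measure mX" "prob_space \<mu>"
    using assms(7) unfolding borel_prob_measures_def by (auto intro: prob_space_imp_sigma_finite)
  have "(\<lambda>(x, y). K x y) \<in> borel_measurable borel"
    using assms(6) unfolding admissible_kernel_def by blast
  then have K_measurable: "(\<lambda>(x, y). K x y) \<in> borel_measurable (borel \<Otimes>\<^sub>M borel)"
    by (rule borel_measurable_pair_borel_compact[OF assms(1,2)])
  have "sets (mX \<Otimes>\<^sub>M \<mu>) = sets (borel \<Otimes>\<^sub>M borel)"
    using assms(7) mX(2) unfolding borel_prob_measures_def by (intro sets_pair_measure_cong) auto
  then show "(\<lambda>(x, y). K x y) \<in> borel_measurable (mX \<Otimes>\<^sub>M \<mu>)"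
    by (subst measurable_cong_sets[OF _ refl]) (use K_measurable in auto)
  show "(\<integral>\<^sup>+ x. e2ennreal \<bar>K x y\<^sub>0\<bar> \<partial>mX) < \<infinity>"
    using assms(6) unfolding admissible_kernel_def by blast
  show "(\<integral>\<^sup>+ x. e2ennreal (K x y) \<partial>mX) = (\<integral>\<^sup>+ x. e2ennreal (K x y\<^sub>0) \<partial>mX)"
    "(\<integral>\<^sup>+ x. e2ennreal (- K x y) \<partial>mX) = (\<integral>\<^sup>+ x. e2ennreal (- K x y\<^sub>0) \<partial>mX)" for y
    by (rule admissible_kernel_nn_integral_section_eq[OF assms(3,4,5,6)], measurable)+
qed

theorem corollary4p8:
  fixes actX :: "'g::{topological_group_add,t2_space} \<Rightarrow> 'x::metric_space \<Rightarrow> 'x"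
    and actY :: "'g \<Rightarrow> 'y::metric_space \<Rightarrow> 'y"
    and mX :: "'x measure" and mY :: "'y measure"
    and K :: "'x \<Rightarrow> 'y \<Rightarrow> ereal"
  assumes "compact (UNIV :: 'g set)"
    and "compact (UNIV :: 'x set)"
    and "compact (UNIV :: 'y set)"
    and "isometric_transitive_action actX"
    and "isometric_transitive_action actY"
    and "invariant_prob_measure actX mX"
    and "invariant_prob_measure actY mY"
    and "admissible_kernel actX actY mX K"
  shows "(INF \<mu>\<in>borel_prob_measures. SUP x. potential K \<mu> x) = (SUP x. potential K mY x)"
proof -
  have mX: "prob_space mX" and mY: "mY \<in> borel_prob_measures"
    using assms(6,7) unfolding invariant_prob_measure_def borel_prob_measures_def by auto
  fix y\<^sub>0 :: 'y
  define C where "C = ereal_integral mX (\<lambda>x. K x y\<^sub>0)"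
  note average = admissible_kernel_average_potential[OF assms(2-6,8), of _ y\<^sub>0, folded C_def]
  have potential_mY: "potential K mY = (\<lambda>_. C)"
  proof
    fix x
    have "potential K mY = (\<lambda>_. potential K mY x)"
      by (intro ext potential_invariant_measure_const[OF assms(4,5,7,8)])
    then have "ereal_integral mX (\<lambda>_. potential K mY x) = C"
      using average[OF mY] by simp
    then show "potential K mY x = C"
      by (simp add: ereal_integral_const[OF mX])
  qed
  have "C \<le> (SUP x. potential K \<mu> x)" if "\<mu> \<in> borel_prob_measures" for \<mu>
    using ereal_integral_le_SUP[OF mX, of "potential K \<mu>"] average[OF that] by simp
  then have "C \<le> (INF \<mu>\<in>borel_prob_measures. SUP x. potential K \<mu> x)"
    by (rule INF_greatest)
  moreover have "(INF \<mu>\<in>borel_prob_measures. SUP x. potential K \<mu> x) \<le> C"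
    using INF_lower[OF mY, of "\<lambda>\<mu>. SUP x. potential K \<mu> x"] by (simp add: potential_mY)
  ultimately show ?thesis
    by (simp add: potential_mY)
qed

end
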